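(* Let $U\subset\operatorname{int}(\mathbb{R}^k_+)$ be a compact set containing a nonempty open set, and let $\lambda_0>1$ be defined by $\ln\lambda_0=\max_{x,y\in U}d_T(x,y)$. Let $f\colon\operatorname{int}(\mathbb{R}^k_+)\to\operatorname{int}(\mathbb{R}^k_+)$ be monotonic ($x\le y\Rightarrow f(x)\le f(y)$). If there exists $c\in[0,1)$ such that $f(\lambda x)\le\lambda^c f(x)$ for all $x\in U$ and all $\lambda\in(1,\lambda_0]$, then $d_T(f(x),f(y))\le c\,d_T(x,y)$ for all $x,y\in U$.
   Context: $\operatorname{int}(\mathbb{R}^k_+)$ is the set of vectors in $\mathbb{R}^k$ with strictly positive coordinates; $x\le y$ means $y-x$ has nonnegative coordinates. Thompson's metric: $d_T(x,y)=\ln\max\{M(x,y),M(y,x)\}$ with $M(x,y)=\inf\{\beta>0: x\le\beta y\}$. Compactness and openness refer to the usual topology of $\mathbb{R}^k$ (equivalently, for compactness, to the topology of $d_T$). *)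

theory Defs
  imports "HOL-Analysis.Analysis"
begin

definition pos_int :: "(real ^ 'k) set" where
  "pos_int = {x. \<forall>i. 0 < x $ i}"

definition cle :: "real ^ 'k \<Rightarrow> real ^ 'k \<Rightarrow> bool" where
  "cle x y \<longleftrightarrow> (\<forall>i. x $ i \<le> y $ i)"

definition Mfun :: "real ^ 'k \<Rightarrow> real ^ 'k \<Rightarrow> real" where
  "Mfun x y = Inf {\<beta>. 0 < \<beta> \<and> cle x (\<beta> *\<^sub>R y)}"

definition thompson :: "real ^ 'k \<Rightarrow> real ^ 'k \<Rightarrow> real" where
  "thompson x y = ln (max (Mfun x y) (Mfun y x))"

end

theory Submission
  imports Defs
begin

(* On the open orthant M(x,y) is the largest coordinate ratio, so d_T(x,y) <= ln t
   says exactly that x <= t y and y <= t x. For x, y in U take t = exp (d_T(x,y)),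
   which lies in [1, lambda_0]; if t > 1, monotonicity and subhomogeneity give
   f x <= f (t y) <= t^c f y and symmetrically, hence d_T(f x, f y) <= c ln t.
   If t = 1 then x = y. *)

lemma Mfun_eq_Max:
  assumes "x \<in> pos_int" "y \<in> pos_int"
  shows "Mfun x y = Max (range (\<lambda>i. x $ i / y $ i))"
proof -
  let ?m = "Max (range (\<lambda>i. x $ i / y $ i))"
  have m_pos: "0 < ?m"
    using assms by (simp add: pos_int_def Max_gr_iff)
  have "cle x (b *\<^sub>R y) \<longleftrightarrow> ?m \<le> b" for b
    using assms by (simp add: cle_def pos_int_def pos_divide_le_eq mult.commute)
  then have "0 < b \<and> cle x (b *\<^sub>R y) \<longleftrightarrow> ?m \<le> b" for b
    using m_pos by (metis less_le_trans)
  then have "{\<beta>. 0 < \<beta> \<and> cle x (\<beta> *\<^sub>R y)} = {?m..}"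
    by auto
  then show ?thesis
    by (simp add: Mfun_def)
qed

lemma Mfun_pos:
  assumes "x \<in> pos_int" "y \<in> pos_int"
  shows "0 < Mfun x y"
  using assms by (simp add: Mfun_eq_Max pos_int_def Max_gr_iff)

lemma Mfun_le_iff:
  assumes "x \<in> pos_int" "y \<in> pos_int"
  shows "Mfun x y \<le> b \<longleftrightarrow> cle x (b *\<^sub>R y)"
  using assms by (simp add: Mfun_eq_Max cle_def pos_int_def pos_divide_le_eq mult.commute)

lemma thompson_le_ln_iff:
  assumes "x \<in> pos_int" "y \<in> pos_int" "0 < t"
  shows "thompson x y \<le> ln t \<longleftrightarrow> cle x (t *\<^sub>R y) \<and> cle y (t *\<^sub>R x)"
  using assms by (simp add: thompson_def Mfun_pos Mfun_le_iff ln_le_cancel_iff less_max_iff_disj)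

lemma thompson_nonneg:
  fixes x y :: "real ^ 'k"
  assumes "x \<in> pos_int" "y \<in> pos_int"
  shows "0 \<le> thompson x y"
proof -
  obtain i :: 'k where True by simp
  have "x $ i / y $ i \<le> Mfun x y" "y $ i / x $ i \<le> Mfun y x"
    using assms by (simp_all add: Mfun_eq_Max)
  moreover have "1 \<le> x $ i / y $ i \<or> 1 \<le> y $ i / x $ i"
    using assms by (auto simp: pos_int_def)
  ultimately show ?thesis
    by (auto simp: thompson_def)
qed

lemma thompson_eq_0_iff:
  assumes "x \<in> pos_int" "y \<in> pos_int"
  shows "thompson x y = 0 \<longleftrightarrow> x = y"
proof -
  have "thompson x y \<le> ln 1 \<longleftrightarrow> x = y"
    using assms by (subst thompson_le_ln_iff) (auto simp: cle_def vec_eq_iff intro: order_antisym)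
  then show ?thesis
    using thompson_nonneg[OF assms] by auto
qed

lemma compact_pos_int_coordinate_bounds:
  fixes U :: "(real ^ 'k) set"
  assumes "compact U" "U \<subseteq> pos_int" "U \<noteq> {}"
  obtains m M where "0 < m" "\<And>x i. x \<in> U \<Longrightarrow> m \<le> x $ i \<and> x $ i \<le> M"
proof -
  let ?S = "\<Union>i. (\<lambda>x. x $ i) ` U"
  have "compact ?S"
    using assms(1) by (intro compact_UN finite_UNIV compact_continuous_image) (auto intro: continuous_intros)
  moreover have "?S \<noteq> {}"
    using assms(3) by auto
  ultimately obtain m M where "m \<in> ?S" "M \<in> ?S" "\<forall>s\<in>?S. m \<le> s \<and> s \<le> M"
    using compact_attains_inf compact_attains_sup by metis
  moreover have "0 < m"
    using \<open>m \<in> ?S\<close> assms(2) by (auto simp: pos_int_def)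
  ultimately show thesis
    using that by blast
qed

lemma bdd_above_thompson_compact:
  assumes "compact U" "U \<subseteq> pos_int"
  shows "bdd_above {thompson x y | x y. x \<in> U \<and> y \<in> U}"
proof (cases "U = {}")
  case False
  then obtain m M where m: "0 < m" and bounds: "\<And>x i. x \<in> U \<Longrightarrow> m \<le> x $ i \<and> x $ i \<le> M"
    using compact_pos_int_coordinate_bounds[OF assms] by blast
  then have "0 < M"
    using False by (meson all_not_in_conv less_le_trans order_trans)
  have "x $ i \<le> (M / m) * y $ i" if "x \<in> U" "y \<in> U" for x y i
  proof -
    have "x $ i \<le> (M / m) * m"
      using bounds[OF that(1)] m by simp
    also have "\<dots> \<le> (M / m) * y $ i"
      using bounds[OF that(2)] m \<open>0 < M\<close> by (intro mult_left_mono) auto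
    finally show ?thesis .
  qed
  then have "thompson x y \<le> ln (M / m)" if "x \<in> U" "y \<in> U" for x y
    using that assms(2) m \<open>0 < M\<close> by (subst thompson_le_ln_iff) (auto simp: cle_def)
  then show ?thesis
    by (intro bdd_aboveI[of _ "ln (M / m)"]) auto
qed simp

lemma thompson_image_le_of_subhomogeneous:
  assumes maps: "\<forall>x\<in>pos_int. f x \<in> pos_int"
    and mono: "\<forall>x\<in>pos_int. \<forall>y\<in>pos_int. cle x y \<longrightarrow> cle (f x) (f y)"
    and pos: "x \<in> pos_int" "y \<in> pos_int" "0 < t"
    and dist: "thompson x y \<le> ln t"
    and subhom: "cle (f (t *\<^sub>R x)) (t powr c *\<^sub>R f x)" "cle (f (t *\<^sub>R y)) (t powr c *\<^sub>R f y)"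
  shows "thompson (f x) (f y) \<le> c * ln t"
proof -
  have scaled: "t *\<^sub>R x \<in> pos_int" "t *\<^sub>R y \<in> pos_int"
    using pos by (auto simp: pos_int_def)
  have "cle x (t *\<^sub>R y)" "cle y (t *\<^sub>R x)"
    using dist pos thompson_le_ln_iff by blast+
  then have "cle (f x) (f (t *\<^sub>R y))" "cle (f y) (f (t *\<^sub>R x))"
    using mono pos scaled by blast+
  with subhom have "cle (f x) (t powr c *\<^sub>R f y)" "cle (f y) (t powr c *\<^sub>R f x)"
    by (auto simp: cle_def intro: order_trans)
  then have "thompson (f x) (f y) \<le> ln (t powr c)"
    using maps pos by (subst thompson_le_ln_iff) auto
  then show ?thesis
    using pos by (simp add: ln_powr)
qed

theorem corollary3:
  fixes U :: "(real ^ 'k) set" and f :: "real ^ 'k \<Rightarrow> real ^ 'k"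
    and lam0 c :: real
  assumes U_sub: "U \<subseteq> pos_int"
    and U_compact: "compact U"
    and U_open: "\<exists>V. open V \<and> V \<noteq> {} \<and> V \<subseteq> U"
    and lam0_def: "lam0 = exp (Sup {thompson x y | x y. x \<in> U \<and> y \<in> U})"
    and f_maps: "\<forall>x\<in>pos_int. f x \<in> pos_int"
    and f_mono: "\<forall>x\<in>pos_int. \<forall>y\<in>pos_int. cle x y \<longrightarrow> cle (f x) (f y)"
    and c: "0 \<le> c" "c < 1"
    and hom: "\<forall>x\<in>U. \<forall>t. 1 < t \<and> t \<le> lam0 \<longrightarrow> cle (f (t *\<^sub>R x)) (t powr c *\<^sub>R f x)"
  shows "\<forall>x\<in>U. \<forall>y\<in>U. thompson (f x) (f y) \<le> c * thompson x y"
proof (intro ballI)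
  fix x y assume "x \<in> U" "y \<in> U"
  then have pos: "x \<in> pos_int" "y \<in> pos_int"
    using U_sub by auto
  show "thompson (f x) (f y) \<le> c * thompson x y"
  proof (cases "thompson x y = 0")
    case True
    then have "f x = f y"
      using pos thompson_eq_0_iff by blast
    then have "thompson (f x) (f y) = 0"
      using pos f_maps thompson_eq_0_iff by blast
    then show ?thesis
      using True by simp
  next
    case False
    define t where "t = exp (thompson x y)"
    have "1 < t"
      using False thompson_nonneg[OF pos] by (simp add: t_def)
    moreover have "t \<le> lam0"
      using \<open>x \<in> U\<close> \<open>y \<in> U\<close> bdd_above_thompson_compact[OF U_compact U_sub]
      by (auto simp: t_def lam0_def intro: cSup_upper)
    ultimately have "thompson (f x) (f y) \<le> c * ln t"
      using \<open>x \<in> U\<close> \<open>y \<in> U\<close> pos hom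
      by (intro thompson_image_le_of_subhomogeneous[OF f_maps f_mono]) (auto simp: t_def)
    then show ?thesis
      by (simp add: t_def)
  qed
qed

end
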